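(* Let $P$ be a punctured Preparata code of length $n$, let $x\in P$, let $m,l\in\mathrm{supp}(x)$, and let $u,v$ be distinct codewords of $P$ which both have zeros in coordinates $m$ and $l$ and which are both at Hamming distance $5$ from $x$. Then there is no coordinate in $\mathrm{supp}(x)\setminus\{m,l\}$ in which both $u$ and $v$ are zero, and there is no coordinate in $\{1,\ldots,n\}\setminus\mathrm{supp}(x)$ in which both $u$ and $v$ are one.
   Context: $E^n$ is the set of binary vectors of length $n$ with the Hamming distance; $\mathrm{supp}(x)=\{k: x_k=1\}$. A Preparata code is a binary code of length $2^m$ ($m\ge 4$ even) with minimum distance $6$ and maximum possible cardinality among binary codes of that length and minimum distance. A punctured Preparata code is obtained from a Preparata code by deleting one coordinate; it has length $n=2^m-1$ and minimum distance $5$. *)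

theory Defs
  imports Main
begin

text \<open>Binary vectors of length N are represented by their supports,
  i.e. subsets of the coordinate set {1..N}.\<close>

definition binvecs :: "nat \<Rightarrow> nat set set" where
  "binvecs N = Pow {1..N}"

definition hdist :: "nat set \<Rightarrow> nat set \<Rightarrow> nat" where
  "hdist x y = card ((x - y) \<union> (y - x))"

definition code_min_dist :: "nat \<Rightarrow> nat \<Rightarrow> nat set set \<Rightarrow> bool" where
  "code_min_dist N d C \<longleftrightarrow> C \<subseteq> binvecs N
     \<and> (\<forall>x\<in>C. \<forall>y\<in>C. x \<noteq> y \<longrightarrow> d \<le> hdist x y)
     \<and> (\<exists>x\<in>C. \<exists>y\<in>C. x \<noteq> y \<and> hdist x y = d)"

definition preparata_code :: "nat \<Rightarrow> nat set set \<Rightarrow> bool" where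
  "preparata_code N C \<longleftrightarrow>
     (\<exists>m. 4 \<le> m \<and> even m \<and> N = 2 ^ m)
     \<and> code_min_dist N 6 C
     \<and> (\<forall>C'. code_min_dist N 6 C' \<longrightarrow> card C' \<le> card C)"

definition delete_coord :: "nat \<Rightarrow> nat set \<Rightarrow> nat set" where
  "delete_coord i x = {k \<in> x. k < i} \<union> {k - 1 | k. k \<in> x \<and> i < k}"

definition punctured_preparata_code :: "nat \<Rightarrow> nat set set \<Rightarrow> bool" where
  "punctured_preparata_code n P \<longleftrightarrow>
     (\<exists>C i. preparata_code (n + 1) C \<and> i \<in> {1..n+1} \<and> P = delete_coord i ` C)"

end

theory Submission
  imports Defs
begin

text \<open>Both u and v differ from x in m and l. A third common coordinate of difference j (a zero
  of both inside supp x, or a one of both outside it) would give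
  d(u, v) \<le> (5 - 3) + (5 - 3) = 4, whereas the punctured code has minimum distance 5, since
  deleting a coordinate lowers the distance 6 of the Preparata code by at most one.\<close>

lemma delete_coord_eq_image:
  "delete_coord i a = (\<lambda>k. if k < i then k else k - 1) ` (a - {i})"
proof (rule set_eqI, rule iffI)
  fix y assume "y \<in> delete_coord i a"
  then consider "y \<in> a" "y < i" | k where "k \<in> a" "i < k" "y = k - 1"
    unfolding delete_coord_def by blast
  then show "y \<in> (\<lambda>k. if k < i then k else k - 1) ` (a - {i})"
  proof cases
    case 1 then show ?thesis by (intro image_eqI[of _ _ y]) auto
  next
    case (2 k) then show ?thesis by (intro image_eqI[of _ _ k]) auto
  qed
next
  fix y assume "y \<in> (\<lambda>k. if k < i then k else k - 1) ` (a - {i})"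
  then obtain k where k: "k \<in> a" "k \<noteq> i" "y = (if k < i then k else k - 1)" by blast
  then show "y \<in> delete_coord i a"
    unfolding delete_coord_def by (cases "k < i") (auto intro!: exI[of _ k])
qed

lemma hdist_image:
  assumes "inj_on f (a \<union> b)"
  shows "hdist (f ` a) (f ` b) = hdist a b"
proof -
  have "(f ` a - f ` b) \<union> (f ` b - f ` a) = f ` ((a - b) \<union> (b - a))"
    using inj_on_image_set_diff[OF assms, of a b] inj_on_image_set_diff[OF assms, of b a]
    by (auto simp only: image_Un)
  moreover have "inj_on f ((a - b) \<union> (b - a))"
    using assms by (rule inj_on_subset) blast
  ultimately show ?thesis
    unfolding hdist_def by (simp add: card_image)
qed

lemma hdist_remove_le:
  assumes "finite a" "finite b"
  shows "hdist a b - 1 \<le> hdist (a - {i}) (b - {i})"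
proof -
  have "(a - {i} - (b - {i})) \<union> (b - {i} - (a - {i})) = ((a - b) \<union> (b - a)) - {i}"
    by blast
  then show ?thesis
    using assms unfolding hdist_def by (simp add: card_Diff_singleton_if)
qed

lemma hdist_delete_coord_ge:
  assumes "finite a" "finite b"
  shows "hdist a b - 1 \<le> hdist (delete_coord i a) (delete_coord i b)"
proof -
  have "inj_on (\<lambda>k::nat. if k < i then k else k - 1) ((a - {i}) \<union> (b - {i}))"
    unfolding inj_on_def by auto
  then have "hdist (delete_coord i a) (delete_coord i b) = hdist (a - {i}) (b - {i})"
    unfolding delete_coord_eq_image by (rule hdist_image)
  with hdist_remove_le[OF assms] show ?thesis by simp
qed

lemma punctured_preparata_code_min_dist:
  assumes "punctured_preparata_code n P" "u \<in> P" "v \<in> P" "u \<noteq> v"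
  shows "5 \<le> hdist u v"
proof -
  obtain C i where C: "preparata_code (n + 1) C" "P = delete_coord i ` C"
    using assms(1) unfolding punctured_preparata_code_def by blast
  obtain a b where ab: "a \<in> C" "b \<in> C" "u = delete_coord i a" "v = delete_coord i b"
    using assms(2,3) C(2) by blast
  have code: "code_min_dist (n + 1) 6 C"
    using C(1) unfolding preparata_code_def by blast
  moreover have "a \<noteq> b"
    using ab(3,4) assms(4) by blast
  ultimately have "6 \<le> hdist a b"
    using ab(1,2) unfolding code_min_dist_def by blast
  moreover have "a \<subseteq> {1..n + 1}" "b \<subseteq> {1..n + 1}"
    using code ab(1,2) unfolding code_min_dist_def binvecs_def by blast+
  then have "hdist a b - 1 \<le> hdist u v"
    unfolding ab(3,4) by (intro hdist_delete_coord_ge) (auto intro: finite_subset)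
  ultimately show ?thesis
    by simp
qed

lemma hdist_add_common_diff_le:
  assumes "finite ((x - u) \<union> (u - x))" "finite ((x - v) \<union> (v - x))"
    and "S \<subseteq> (x - u) \<union> (u - x)" "S \<subseteq> (x - v) \<union> (v - x)"
  shows "hdist u v + 2 * card S \<le> hdist x u + hdist x v"
proof -
  let ?A = "(x - u) \<union> (u - x)" and ?B = "(x - v) \<union> (v - x)"
  have fin: "finite S" using assms(1,3) by (rule finite_subset[rotated])
  have "hdist u v \<le> card ((?A - S) \<union> (?B - S))"
    unfolding hdist_def using assms(3,4) by (intro card_mono) (use assms(1,2) in auto)
  also have "\<dots> \<le> card (?A - S) + card (?B - S)"
    by (rule card_Un_le)
  also have "\<dots> = hdist x u - card S + (hdist x v - card S)"
    unfolding hdist_def using assms fin by (simp add: card_Diff_subset)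
  finally show ?thesis
    using card_mono[OF assms(1,3)] card_mono[OF assms(2,4)] unfolding hdist_def by linarith
qed

theorem lemma3:
  fixes n :: nat and P :: "nat set set" and x u v :: "nat set" and m l :: nat
  assumes "punctured_preparata_code n P"
    and "x \<in> P"
    and "m \<in> x" and "l \<in> x" and "m \<noteq> l"
    and "u \<in> P" and "v \<in> P" and "u \<noteq> v"
    and "m \<notin> u" and "l \<notin> u" and "m \<notin> v" and "l \<notin> v"
    and "hdist x u = 5" and "hdist x v = 5"
  shows "\<not> (\<exists>j \<in> x - {m, l}. j \<notin> u \<and> j \<notin> v)
       \<and> \<not> (\<exists>j \<in> {1..n} - x. j \<in> u \<and> j \<in> v)"
proof -
  have no_common: False
    if "j \<notin> {m, l}" "j \<in> (x - u) \<union> (u - x)" "j \<in> (x - v) \<union> (v - x)" for j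
  proof -
    have "finite ((x - u) \<union> (u - x))" "finite ((x - v) \<union> (v - x))"
      using assms(13,14) unfolding hdist_def by (intro card_ge_0_finite, simp)+
    moreover have "card {m, l, j} = 3" using that(1) assms(5) by auto
    moreover have "{m, l, j} \<subseteq> (x - u) \<union> (u - x)" "{m, l, j} \<subseteq> (x - v) \<union> (v - x)"
      using that assms(3,4,9-12) by auto
    ultimately have "hdist u v \<le> 4"
      using hdist_add_common_diff_le[of x u v "{m, l, j}"] assms(13,14) by simp
    then show False
      using punctured_preparata_code_min_dist[OF assms(1,6,7,8)] by simp
  qed
  show ?thesis
  proof (intro conjI notI)
    assume "\<exists>j \<in> x - {m, l}. j \<notin> u \<and> j \<notin> v"
    then obtain j where "j \<in> x - {m, l}" "j \<notin> u" "j \<notin> v" by blast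
    then show False using no_common[of j] by blast
  next
    assume "\<exists>j \<in> {1..n} - x. j \<in> u \<and> j \<in> v"
    then obtain j where "j \<notin> x" "j \<in> u" "j \<in> v" by blast
    moreover have "j \<notin> {m, l}" using assms(3,4) \<open>j \<notin> x\<close> by blast
    ultimately show False using no_common[of j] by blast
  qed
qed

end
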